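(* Let $X\subset\mathbb{R}_+$ be a Borel set with $0\in X$, let $\kappa\ge0$ and $\delta\in(0,1)$, and let $x_0>0$ satisfy $x_0\ge\frac{2\delta\kappa}{1-\delta}$. Let $\bar p$ be the stationary decision rule with $\bar p(y)=\frac{1-\delta}{2-\delta}$ for all $y\ge x_0$. Then: (a) $R_{\bar p}(x_0)\ge 1/4$; (b) if $\sup X=\infty$, then $\bar p$ is dynamically robust, i.e. $R_{\bar p}(x_0)=\sup_pR_p(x_0)$, the supremum being over all stationary decision rules.
   Context: Search with additive-multiplicative costs. Fix a Borel set $X\subset\mathbb{R}_+$ with $0\in X$, an additive cost $\kappa\ge 0$ and a discount factor $\delta\in(0,1]$ with $\kappa+(1-\delta)>0$, and an outside option $x_0>0$. An environment is a probability distribution $F$ on $X$; alternatives $x_1,x_2,\dots$ are i.i.d. with law $F$, and the best-so-far alternative after round $t$ is $y_t=\max\{x_0,\dots,x_t\}$. In each round the individual either stops and consumes the best-so-far alternative, or proceeds to the next round, incurring cost $\kappa$ with all future payoffs discounted by $\delta$; thus stopping at round $t\ge1$ yields, from the perspective of round $0$, $-(\delta+\dots+\delta^t)\kappa+\delta^ty_t$. A stationary decision rule is a function $p$ giving the stopping probability $p(y)\in[0,1]$ as a function of the current best-so-far alternative $y$. For an environment $F$ and a current best-so-far alternative $y$, $U_p(F,y)$ denotes the expected payoff of $p$, which satisfies $U_p(F,y)=p(y)y+(1-p(y))\delta\big(-\kappa+\int U_p(F,\max\{y,x\})\,dF(x)\big)$, and $V(F,y)$ is the optimal (supremal) expected payoff,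 satisfying $V(F,y)=\max_{q\in[0,1]}\big(qy+(1-q)\delta(-\kappa+\int V(F,\max\{y,x\})\,dF(x))\big)$. A binary environment $F_{(z,\sigma)}$ is the lottery giving $0$ with probability $1-\sigma$ and $z$ with probability $\sigma$; $\mathcal B_X=\{F_{(z,\sigma)}:z\in X,\sigma\in[0,1]\}$. The performance ratio of $p$ is $R_p(x_0)=\inf_{y\ge x_0}\inf_{F\in\mathcal B_X}U_p(F,y)/V(F,y)$. *)

theory Defs
  imports "HOL-Probability.Probability"
begin

text \<open>An environment is a
probability measure F on the reals (supported on X). A stationary decision
rule p maps the best-so-far alternative y to a stopping probability.\<close>

definition stationary_rule :: "(real \<Rightarrow> real) \<Rightarrow> bool" where
  "stationary_rule p \<longleftrightarrow> (\<forall>y. 0 \<le> p y \<and> p y \<le> 1)"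

definition U :: "real \<Rightarrow> real \<Rightarrow> (real \<Rightarrow> real) \<Rightarrow> real measure \<Rightarrow> real \<Rightarrow> real" where
  "U \<kappa> \<delta> p F = (THE f. \<forall>y. f y =
      p y * y + (1 - p y) * (\<delta> * (- \<kappa> + (\<integral>x. f (max y x) \<partial>F))))"

definition V :: "real \<Rightarrow> real \<Rightarrow> real measure \<Rightarrow> real \<Rightarrow> real" where
  "V \<kappa> \<delta> F = (THE f. \<forall>y. f y =
      (SUP q\<in>{0..1::real}. q * y + (1 - q) * (\<delta> * (- \<kappa> + (\<integral>x. f (max y x) \<partial>F)))))"

definition binary_env :: "real \<Rightarrow> real \<Rightarrow> real measure" where
  "binary_env z \<sigma> = measure_pmf (map_pmf (\<lambda>b. if b then z else 0) (bernoulli_pmf \<sigma>))"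

definition binary_envs :: "real set \<Rightarrow> real measure set" where
  "binary_envs X = {binary_env z \<sigma> | z \<sigma>. z \<in> X \<and> 0 \<le> \<sigma> \<and> \<sigma> \<le> 1}"

definition perf_ratio :: "real \<Rightarrow> real \<Rightarrow> real set \<Rightarrow> (real \<Rightarrow> real) \<Rightarrow> real \<Rightarrow> real" where
  "perf_ratio \<kappa> \<delta> X p x0 =
     Inf {U \<kappa> \<delta> p F y / V \<kappa> \<delta> F y | y F. x0 \<le> y \<and> F \<in> binary_envs X}"

definition dynamically_robust :: "real \<Rightarrow> real \<Rightarrow> real set \<Rightarrow> (real \<Rightarrow> real) \<Rightarrow> real \<Rightarrow> bool" where
  "dynamically_robust \<kappa> \<delta> X p x0 \<longleftrightarrow>
     perf_ratio \<kappa> \<delta> X p x0 = (SUP p'\<in>{p'. stationary_rule p'}. perf_ratio \<kappa> \<delta> X p' x0)"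

end

theory Submission
  imports Defs
begin

(* On a binary environment F_(z,sigma) everything is explicit: once y >= z nothing can improve,
   and below z the only relevant event is the arrival of z, so U_p and V solve scalar affine
   fixed-point equations region by region.

   (a) For pbar = (1-delta)/(2-delta) the ratio of these closed forms is at least 1/4; this
   reduces to polynomial inequalities that hold as soon as (1-delta) y >= 2 delta kappa.

   (b) Let w(t) = p(t) / (1 - (1-p(t)) delta) be the expected discount at stopping while the
   best alternative stays t, and s = sup of w over [x0,oo). Take y with w(y) close to s and a
   rare large prize z, with sigma z = M large and sigma small. The optimum waits for z and gets
   about delta M / (1-delta); p gets about the fraction (1 - w(y)) w(z) <= (1 - s) s <= 1/4 of it,
   since it stops at y too early with weight w(y) and stops after z arrives only with weight w(z).
   So no stationary rule has ratio above 1/4, and pbar attains it. *)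

lemma integral_binary_env:
  assumes "0 \<le> \<sigma>" "\<sigma> \<le> 1"
  shows "(\<integral>x. f x \<partial>binary_env z \<sigma>) = (1 - \<sigma>) * f 0 + \<sigma> * f z"
  using assms unfolding binary_env_def by (simp add: algebra_simps)

lemma SUP_mix_eq_max:
  fixes y c :: real
  shows "(SUP q\<in>{0..1}. q * y + (1 - q) * c) = max y c"
proof (rule cSup_eq_maximum)
  show "max y c \<in> (\<lambda>q. q * y + (1 - q) * c) ` {0..1}"
  proof (cases "c \<le> y")
    case True
    then show ?thesis by (auto intro!: image_eqI[where x=1])
  next
    case False
    then show ?thesis by (auto intro!: image_eqI[where x=0])
  qed
next
  fix x assume "x \<in> (\<lambda>q. q * y + (1 - q) * c) ` {0..1}"
  then obtain q where q: "0 \<le> q" "q \<le> 1" "x = q * y + (1 - q) * c" by auto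
  have "q * y + (1 - q) * c \<le> q * max y c + (1 - q) * max y c"
    using q by (intro add_mono mult_left_mono) auto
  then show "x \<le> max y c" using q by (simp add: algebra_simps)
qed

lemma affine_fixpoint_iff:
  fixes t a b :: real
  assumes "b < 1"
  shows "t = a + b * t \<longleftrightarrow> t = a / (1 - b)"
  using assms by (auto simp: field_simps)

lemma le_affine_fixpoint:
  fixes l a b :: real
  assumes "b < 1" "l \<le> a + b * l"
  shows "l \<le> a / (1 - b)"
  using assms by (simp add: le_divide_eq algebra_simps)

lemma fixpoint_max_affine_iff:
  fixes t y a b :: real
  assumes "b < 1"
  shows "t = max y (a + b * t) \<longleftrightarrow> t = max y (a / (1 - b))"
proof -
  define w where "w = a / (1 - b)"
  have gap: "a + b * s - s = (1 - b) * (w - s)" for s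
    using assms unfolding w_def by (simp add: field_simps)
  have below_iff: "a + b * s \<le> s \<longleftrightarrow> w \<le> s" for s
  proof -
    have "a + b * s \<le> s \<longleftrightarrow> (1 - b) * (w - s) \<le> 0" using gap[of s] by linarith
    also have "\<dots> \<longleftrightarrow> w \<le> s" using assms by (simp add: mult_le_0_iff)
    finally show ?thesis .
  qed
  have fixpoint_iff: "s = a + b * s \<longleftrightarrow> s = w" for s
    using gap[of s] assms by auto
  show ?thesis
    using below_iff[of y] fixpoint_iff[of t] by (cases "w \<le> y") (auto simp: w_def[symmetric] max_def)
qed

lemma binary_recursion_nonneg:
  fixes \<Phi> :: "real \<Rightarrow> real \<Rightarrow> real \<Rightarrow> real" and z y :: real
  assumes "0 \<le> z" "0 \<le> y"
    and top: "\<And>y t. z \<le> y \<Longrightarrow> t = \<Phi> y t t \<longleftrightarrow> t = g y"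
    and below: "\<And>y t. 0 \<le> y \<Longrightarrow> y < z \<Longrightarrow> t = \<Phi> y t (g z) \<longleftrightarrow> t = h y"
    and eq: "\<forall>y. f y = \<Phi> y (f (max y 0)) (f (max y z))"
  shows "f y = (if z \<le> y then g y else h y)"
proof -
  have above: "f y = g y" if "z \<le> y" for y
  proof -
    have "f y = \<Phi> y (f (max y 0)) (f (max y z))" using eq by blast
    also have "max y 0 = y" using \<open>0 \<le> z\<close> that by auto
    also have "max y z = y" using that by auto
    finally show ?thesis using top[OF that] by simp
  qed
  show ?thesis
  proof (cases "z \<le> y")
    case True
    then show ?thesis using above by simp
  next
    case False
    have "f y = \<Phi> y (f (max y 0)) (f (max y z))" using eq by blast
    also have "max y 0 = y" using \<open>0 \<le> y\<close> by auto
    also have "max y z = z" using False by auto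
    also have "f z = g z" using above by simp
    finally show ?thesis using below[OF \<open>0 \<le> y\<close>] False by simp
  qed
qed

lemma binary_recursion_solvable:
  fixes \<Phi> :: "real \<Rightarrow> real \<Rightarrow> real \<Rightarrow> real" and z :: real
  assumes "0 \<le> z"
    and top: "\<And>y t. z \<le> y \<Longrightarrow> t = \<Phi> y t t \<longleftrightarrow> t = g y"
    and below: "\<And>y t. 0 \<le> y \<Longrightarrow> y < z \<Longrightarrow> t = \<Phi> y t (g z) \<longleftrightarrow> t = h y"
  obtains f where "\<forall>y. f y = \<Phi> y (f (max y 0)) (f (max y z))"
proof -
  define f0 where "f0 y = (if z \<le> y then g y else h y)" for y
  define f where "f y = (if 0 \<le> y then f0 y else \<Phi> y (f0 0) (g z))" for y
  have "f y = \<Phi> y (f (max y 0)) (f (max y z))" for y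
  proof -
    consider "z \<le> y" | "0 \<le> y" "y < z" | "y < 0" by linarith
    then show ?thesis
    proof cases
      case 1
      then have "max y 0 = y" "max y z = y" "f y = g y" using \<open>0 \<le> z\<close> by (auto simp: f_def f0_def)
      then show ?thesis using top[OF 1, of "g y"] by simp
    next
      case 2
      then have "max y 0 = y" "max y z = z" "f y = h y" "f z = g z" by (auto simp: f_def f0_def)
      then show ?thesis using below[OF 2, of "h y"] by simp
    next
      case 3
      then show ?thesis using \<open>0 \<le> z\<close> by (simp add: f_def f0_def)
    qed
  qed
  then show ?thesis using that by blast
qed

lemma the_binary_recursion:
  fixes \<Phi> :: "real \<Rightarrow> real \<Rightarrow> real \<Rightarrow> real" and z y :: real
  assumes "0 \<le> z" "0 \<le> y"
    and top: "\<And>y t. z \<le> y \<Longrightarrow> t = \<Phi> y t t \<longleftrightarrow> t = g y"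
    and below: "\<And>y t. 0 \<le> y \<Longrightarrow> y < z \<Longrightarrow> t = \<Phi> y t (g z) \<longleftrightarrow> t = h y"
  shows "(THE f. \<forall>y. f y = \<Phi> y (f (max y 0)) (f (max y z))) y = (if z \<le> y then g y else h y)"
proof -
  obtain f where f: "\<forall>y. f y = \<Phi> y (f (max y 0)) (f (max y z))"
    using binary_recursion_solvable[of z \<Phi> g h] \<open>0 \<le> z\<close> top below by blast
  have solution: "f' y = (if z \<le> y then g y else h y)"
    if "0 \<le> y" "\<forall>y. f' y = \<Phi> y (f' (max y 0)) (f' (max y z))" for f' y
    using binary_recursion_nonneg[OF \<open>0 \<le> z\<close> that(1) top below that(2)] .
  have "(THE f. \<forall>y. f y = \<Phi> y (f (max y 0)) (f (max y z))) = f"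
  proof (rule the_equality)
    fix f' assume f': "\<forall>y. f' y = \<Phi> y (f' (max y 0)) (f' (max y z))"
    show "f' = f"
    proof
      fix y
      show "f' y = f y"
      proof (cases "0 \<le> y")
        case True
        then show ?thesis using solution[OF _ f] solution[OF _ f'] by simp
      next
        case False
        then have "max y 0 = 0" "max y z = z" using \<open>0 \<le> z\<close> by auto
        moreover have "f' 0 = f 0" "f' z = f z"
          using solution[OF _ f] solution[OF _ f'] \<open>0 \<le> z\<close> by simp_all
        ultimately show ?thesis using f f' by metis
      qed
    qed
  qed (use f in blast)
  then show ?thesis using solution[OF \<open>0 \<le> y\<close> f] by simp
qed

lemma stationary_rule_contraction:
  assumes "stationary_rule p" "0 \<le> \<delta>" "\<delta> < 1" "0 \<le> \<sigma>" "\<sigma> \<le> 1"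
  shows "(1 - p y) * \<delta> * (1 - \<sigma>) < 1"
proof -
  have "0 \<le> 1 - p y" "1 - p y \<le> 1" using assms(1) unfolding stationary_rule_def by auto
  then have "(1 - p y) * \<delta> \<le> \<delta>" "(1 - p y) * \<delta> * (1 - \<sigma>) \<le> (1 - p y) * \<delta>"
    using assms by (intro mult_left_le_one_le mult_right_le_one_le mult_nonneg_nonneg; simp)+
  then show ?thesis using assms by linarith
qed

section \<open>Payoffs in binary environments\<close>

(* The closed forms of U_p and V on F_(z,sigma): settled_payoff is U_p for y >= z, where no
   alternative can improve on y; pending_payoff is U_p for 0 <= y < z; waiting_value is the
   payoff of searching until z arrives and then stopping. *)

definition settled_payoff :: "real \<Rightarrow> real \<Rightarrow> (real \<Rightarrow> real) \<Rightarrow> real \<Rightarrow> real" where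
  "settled_payoff \<kappa> \<delta> p y = (p y * y - (1 - p y) * \<delta> * \<kappa>) / (1 - (1 - p y) * \<delta>)"

definition pending_payoff :: "real \<Rightarrow> real \<Rightarrow> (real \<Rightarrow> real) \<Rightarrow> real \<Rightarrow> real \<Rightarrow> real \<Rightarrow> real" where
  "pending_payoff \<kappa> \<delta> p z \<sigma> y =
     (p y * y + (1 - p y) * \<delta> * (- \<kappa> + \<sigma> * settled_payoff \<kappa> \<delta> p z)) / (1 - (1 - p y) * \<delta> * (1 - \<sigma>))"

definition waiting_value :: "real \<Rightarrow> real \<Rightarrow> real \<Rightarrow> real \<Rightarrow> real" where
  "waiting_value \<kappa> \<delta> z \<sigma> = \<delta> * (\<sigma> * z - \<kappa>) / (1 - \<delta> * (1 - \<sigma>))"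

lemma U_binary_env:
  assumes p: "stationary_rule p" and \<delta>: "0 < \<delta>" "\<delta> < 1"
    and z: "0 \<le> z" and \<sigma>: "0 \<le> \<sigma>" "\<sigma> \<le> 1" and y: "0 \<le> y"
  shows "U \<kappa> \<delta> p (binary_env z \<sigma>) y =
    (if z \<le> y then settled_payoff \<kappa> \<delta> p y else pending_payoff \<kappa> \<delta> p z \<sigma> y)"
proof -
  define \<Phi> where "\<Phi> y a b = p y * y + (1 - p y) * (\<delta> * (- \<kappa> + ((1 - \<sigma>) * a + \<sigma> * b)))" for y a b
  have contraction: "(1 - p y) * \<delta> * (1 - \<sigma>) < 1" "(1 - p y) * \<delta> < 1" for y
    using stationary_rule_contraction[OF p _ \<delta>(2) \<sigma>] stationary_rule_contraction[OF p _ \<delta>(2), of 0] \<delta>(1)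
    by auto
  have binary_recursion: "U \<kappa> \<delta> p (binary_env z \<sigma>) = (THE f. \<forall>y. f y = \<Phi> y (f (max y 0)) (f (max y z)))"
    unfolding U_def \<Phi>_def using \<sigma> by (simp add: integral_binary_env)
  show ?thesis unfolding binary_recursion
  proof (rule the_binary_recursion[OF z y])
    fix y t
    have "\<Phi> y t t = (p y * y - (1 - p y) * \<delta> * \<kappa>) + (1 - p y) * \<delta> * t"
      unfolding \<Phi>_def by (simp add: algebra_simps)
    then show "t = \<Phi> y t t \<longleftrightarrow> t = settled_payoff \<kappa> \<delta> p y"
      unfolding settled_payoff_def using affine_fixpoint_iff[OF contraction(2)] by simp
    have "\<Phi> y t (settled_payoff \<kappa> \<delta> p z) =
        (p y * y + (1 - p y) * \<delta> * (- \<kappa> + \<sigma> * settled_payoff \<kappa> \<delta> p z)) + (1 - p y) * \<delta> * (1 - \<sigma>) * t"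
      unfolding \<Phi>_def by (simp add: algebra_simps)
    then show "t = \<Phi> y t (settled_payoff \<kappa> \<delta> p z) \<longleftrightarrow> t = pending_payoff \<kappa> \<delta> p z \<sigma> y"
      unfolding pending_payoff_def using affine_fixpoint_iff[OF contraction(1)] by simp
  qed
qed

lemma V_binary_env:
  assumes \<kappa>: "0 \<le> \<kappa>" and \<delta>: "0 < \<delta>" "\<delta> < 1"
    and z: "0 \<le> z" and \<sigma>: "0 \<le> \<sigma>" "\<sigma> \<le> 1" and y: "0 \<le> y"
  shows "V \<kappa> \<delta> (binary_env z \<sigma>) y = (if z \<le> y then y else max y (waiting_value \<kappa> \<delta> z \<sigma>))"
proof -
  define \<Phi> where "\<Phi> y a b = max y (\<delta> * (- \<kappa> + ((1 - \<sigma>) * a + \<sigma> * b)))" for y a b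
  have binary_recursion: "V \<kappa> \<delta> (binary_env z \<sigma>) = (THE f. \<forall>y. f y = \<Phi> y (f (max y 0)) (f (max y z)))"
    unfolding V_def \<Phi>_def using \<sigma> by (simp add: integral_binary_env SUP_mix_eq_max)
  show ?thesis unfolding binary_recursion
  proof (rule the_binary_recursion[OF z y])
    fix y t
    assume "z \<le> y"
    have "0 \<le> \<delta> * \<kappa> / (1 - \<delta>)" using \<kappa> \<delta> by simp
    then have "max y (- (\<delta> * \<kappa>) / (1 - \<delta>)) = y" using z \<open>z \<le> y\<close> by (simp add: max_def)
    moreover have "\<Phi> y t t = max y (- (\<delta> * \<kappa>) + \<delta> * t)"
      unfolding \<Phi>_def by (simp add: algebra_simps)
    ultimately show "t = \<Phi> y t t \<longleftrightarrow> t = y"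
      using fixpoint_max_affine_iff[OF \<open>\<delta> < 1\<close>] by metis
  next
    fix y t
    have "\<delta> * (1 - \<sigma>) \<le> \<delta>" using \<delta> \<sigma> by (intro mult_right_le_one_le) auto
    then have "\<delta> * (1 - \<sigma>) < 1" using \<delta> by linarith
    moreover have "\<Phi> y t z = max y (\<delta> * (\<sigma> * z - \<kappa>) + \<delta> * (1 - \<sigma>) * t)"
      unfolding \<Phi>_def by (simp add: algebra_simps)
    ultimately show "t = \<Phi> y t z \<longleftrightarrow> t = max y (waiting_value \<kappa> \<delta> z \<sigma>)"
      unfolding waiting_value_def using fixpoint_max_affine_iff by metis
  qed
qed

lemma settled_payoff_ge:
  assumes p: "stationary_rule p" and \<kappa>: "0 \<le> \<kappa>" and \<delta>: "0 < \<delta>" "\<delta> < 1" and y: "0 \<le> y"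
  shows "- (\<delta> * \<kappa> / (1 - \<delta>)) \<le> settled_payoff \<kappa> \<delta> p y"
proof -
  define K where "K = \<delta> * \<kappa> / (1 - \<delta>)"
  have K: "0 \<le> K" "\<delta> * (\<kappa> + K) = K" using \<kappa> \<delta> unfolding K_def by (simp_all add: field_simps)
  have q: "0 \<le> p y" "p y \<le> 1" using p unfolding stationary_rule_def by auto
  have "- K \<le> p y * y - (1 - p y) * K" using q y K by (simp add: algebra_simps)
  also have "\<dots> = p y * y - (1 - p y) * (\<delta> * (\<kappa> + K))" using K(2) by simp
  also have "\<dots> = p y * y - (1 - p y) * \<delta> * \<kappa> + (1 - p y) * \<delta> * (- K)"
    by (simp add: algebra_simps)
  finally show ?thesis
    unfolding settled_payoff_def K_def[symmetric]
    using stationary_rule_contraction[OF p less_imp_le[OF \<delta>(1)] \<delta>(2), of 0]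
    by (intro le_affine_fixpoint) simp_all
qed

lemma pending_payoff_ge:
  assumes p: "stationary_rule p" and \<kappa>: "0 \<le> \<kappa>" and \<delta>: "0 < \<delta>" "\<delta> < 1"
    and y: "0 \<le> y" and z: "0 \<le> z" and \<sigma>: "0 \<le> \<sigma>" "\<sigma> \<le> 1"
  shows "- (\<delta> * \<kappa> / (1 - \<delta>)) \<le> pending_payoff \<kappa> \<delta> p z \<sigma> y"
proof -
  define K where "K = \<delta> * \<kappa> / (1 - \<delta>)"
  have K: "0 \<le> K" "\<delta> * (\<kappa> + K) = K" using \<kappa> \<delta> unfolding K_def by (simp_all add: field_simps)
  have q: "0 \<le> p y" "p y \<le> 1" using p unfolding stationary_rule_def by auto
  have "- (\<sigma> * K) \<le> \<sigma> * settled_payoff \<kappa> \<delta> p z"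
    using settled_payoff_ge[OF p \<kappa> \<delta> z] \<sigma> unfolding K_def[symmetric]
    by (metis minus_mult_right mult_left_mono)
  then have "(1 - p y) * \<delta> * (- \<kappa> - \<sigma> * K) \<le> (1 - p y) * \<delta> * (- \<kappa> + \<sigma> * settled_payoff \<kappa> \<delta> p z)"
    using q \<delta> by (intro mult_left_mono) auto
  moreover have "- K \<le> p y * y - (1 - p y) * K" using q y K by (simp add: algebra_simps)
  moreover have "(1 - p y) * K = (1 - p y) * \<delta> * (\<kappa> + \<sigma> * K) + (1 - p y) * \<delta> * (1 - \<sigma>) * K"
  proof -
    have "(1 - p y) * K = (1 - p y) * (\<delta> * (\<kappa> + K))" using K(2) by simp
    then show ?thesis by (simp add: algebra_simps)
  qed
  ultimately have "- K \<le> p y * y + (1 - p y) * \<delta> * (- \<kappa> + \<sigma> * settled_payoff \<kappa> \<delta> p z)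
      + (1 - p y) * \<delta> * (1 - \<sigma>) * (- K)"
    by (simp add: algebra_simps)
  then show ?thesis
    unfolding pending_payoff_def K_def[symmetric]
    using stationary_rule_contraction[OF p less_imp_le[OF \<delta>(1)] \<delta>(2) \<sigma>]
    by (intro le_affine_fixpoint) simp_all
qed

lemma binary_ratio_ge:
  assumes p: "stationary_rule p" and \<kappa>: "0 \<le> \<kappa>" and \<delta>: "0 < \<delta>" "\<delta> < 1"
    and y: "0 < x0" "x0 \<le> y" and z: "0 \<le> z" and \<sigma>: "0 \<le> \<sigma>" "\<sigma> \<le> 1"
  shows "- (\<delta> * \<kappa> / (1 - \<delta>)) / x0 \<le> U \<kappa> \<delta> p (binary_env z \<sigma>) y / V \<kappa> \<delta> (binary_env z \<sigma>) y"
proof -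
  define K where "K = \<delta> * \<kappa> / (1 - \<delta>)"
  define u where "u = U \<kappa> \<delta> p (binary_env z \<sigma>) y"
  define v where "v = V \<kappa> \<delta> (binary_env z \<sigma>) y"
  have K: "0 \<le> K" unfolding K_def using \<kappa> \<delta> by simp
  have y0: "0 \<le> y" using y by simp
  have u: "- K \<le> u"
    unfolding u_def K_def U_binary_env[OF p \<delta> z \<sigma> y0]
    using settled_payoff_ge[OF p \<kappa> \<delta> y0] pending_payoff_ge[OF p \<kappa> \<delta> y0 z \<sigma>] by simp
  have v: "y \<le> v" unfolding v_def V_binary_env[OF \<kappa> \<delta> z \<sigma> y0] by simp
  show ?thesis
  proof (cases "0 \<le> u")
    case True
    have "- K / x0 \<le> 0" using K y by (simp add: divide_nonpos_pos)
    also have "0 \<le> u / v" using True v y by simp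
    finally show ?thesis unfolding u_def v_def K_def .
  next
    case False
    have "- K / x0 \<le> - K / y" using K y by (simp add: divide_left_mono)
    also have "\<dots> \<le> u / y" using u y by (intro divide_right_mono) auto
    also have "\<dots> \<le> u / v" using False v y by (intro divide_left_mono_neg) auto
    finally show ?thesis unfolding u_def v_def K_def .
  qed
qed

lemma perf_ratio_le_binary:
  assumes p: "stationary_rule p" and \<kappa>: "0 \<le> \<kappa>" and \<delta>: "0 < \<delta>" "\<delta> < 1"
    and X: "X \<subseteq> {0..}" and y: "0 < x0" "x0 \<le> y" and z: "z \<in> X" and \<sigma>: "0 \<le> \<sigma>" "\<sigma> \<le> 1"
  shows "perf_ratio \<kappa> \<delta> X p x0 \<le> U \<kappa> \<delta> p (binary_env z \<sigma>) y / V \<kappa> \<delta> (binary_env z \<sigma>) y"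
  unfolding perf_ratio_def
proof (rule cInf_lower)
  show "U \<kappa> \<delta> p (binary_env z \<sigma>) y / V \<kappa> \<delta> (binary_env z \<sigma>) y
      \<in> {U \<kappa> \<delta> p F y / V \<kappa> \<delta> F y | y F. x0 \<le> y \<and> F \<in> binary_envs X}"
    using y z \<sigma> unfolding binary_envs_def by blast
  show "bdd_below {U \<kappa> \<delta> p F y / V \<kappa> \<delta> F y | y F. x0 \<le> y \<and> F \<in> binary_envs X}"
  proof (rule bdd_belowI)
    fix r assume "r \<in> {U \<kappa> \<delta> p F y / V \<kappa> \<delta> F y | y F. x0 \<le> y \<and> F \<in> binary_envs X}"
    then obtain y' z' \<sigma>' where "r = U \<kappa> \<delta> p (binary_env z' \<sigma>') y' / V \<kappa> \<delta> (binary_env z' \<sigma>') y'"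
      "x0 \<le> y'" "z' \<in> X" "0 \<le> \<sigma>'" "\<sigma>' \<le> 1"
      unfolding binary_envs_def by blast
    then show "- (\<delta> * \<kappa> / (1 - \<delta>)) / x0 \<le> r"
      using binary_ratio_ge[OF p \<kappa> \<delta> y(1)] X by auto
  qed
qed

lemma perf_ratio_ge_binary:
  assumes "0 \<in> X"
    and "\<And>y z \<sigma>. x0 \<le> y \<Longrightarrow> z \<in> X \<Longrightarrow> 0 \<le> \<sigma> \<Longrightarrow> \<sigma> \<le> 1 \<Longrightarrow>
      c \<le> U \<kappa> \<delta> p (binary_env z \<sigma>) y / V \<kappa> \<delta> (binary_env z \<sigma>) y"
  shows "c \<le> perf_ratio \<kappa> \<delta> X p x0"
  unfolding perf_ratio_def
proof (rule cInf_greatest)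
  have "binary_env 0 0 \<in> binary_envs X"
    using assms(1) unfolding binary_envs_def by (intro CollectI exI[of _ 0]) auto
  then show "{U \<kappa> \<delta> p F y / V \<kappa> \<delta> F y | y F. x0 \<le> y \<and> F \<in> binary_envs X} \<noteq> {}" by blast
  show "c \<le> r" if "r \<in> {U \<kappa> \<delta> p F y / V \<kappa> \<delta> F y | y F. x0 \<le> y \<and> F \<in> binary_envs X}" for r
    using that assms(2) unfolding binary_envs_def by blast
qed

section \<open>The rule pbar guarantees one quarter\<close>

lemma pbar_weights:
  fixes \<delta> \<sigma> :: real
  assumes "\<delta> < 1"
  shows "1 - (1 - \<delta>) / (2 - \<delta>) = 1 / (2 - \<delta>)"
    and "1 - 1 / (2 - \<delta>) * \<delta> = 2 * (1 - \<delta>) / (2 - \<delta>)"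
    and "1 - 1 / (2 - \<delta>) * \<delta> * (1 - \<sigma>) = (2 * (1 - \<delta>) + \<delta> * \<sigma>) / (2 - \<delta>)"
  using assms by (simp_all add: field_simps)

lemma settled_payoff_pbar:
  assumes "\<delta> < 1"
  shows "settled_payoff \<kappa> \<delta> (\<lambda>_. (1 - \<delta>) / (2 - \<delta>)) y = ((1 - \<delta>) * y - \<delta> * \<kappa>) / (2 * (1 - \<delta>))"
proof -
  have "settled_payoff \<kappa> \<delta> (\<lambda>_. (1 - \<delta>) / (2 - \<delta>)) y =
      ((1 - \<delta>) / (2 - \<delta>) * y - 1 / (2 - \<delta>) * \<delta> * \<kappa>) / (2 * (1 - \<delta>) / (2 - \<delta>))"
    by (simp only: settled_payoff_def pbar_weights[OF assms])
  also have "\<dots> = (((1 - \<delta>) * y - \<delta> * \<kappa>) / (2 - \<delta>)) / (2 * (1 - \<delta>) / (2 - \<delta>))"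
    by (simp only: times_divide_eq_left mult_1_left diff_divide_distrib[symmetric])
  also have "\<dots> = ((1 - \<delta>) * y - \<delta> * \<kappa>) / (2 * (1 - \<delta>))"
    using assms by simp
  finally show ?thesis .
qed

lemma pending_payoff_pbar:
  assumes "\<delta> < 1" "0 \<le> \<delta>" "0 \<le> \<sigma>"
  shows "pending_payoff \<kappa> \<delta> (\<lambda>_. (1 - \<delta>) / (2 - \<delta>)) z \<sigma> y =
    (2 * (1 - \<delta>) * ((1 - \<delta>) * y - \<delta> * \<kappa>) + \<delta> * \<sigma> * ((1 - \<delta>) * z - \<delta> * \<kappa>))
      / (2 * (1 - \<delta>) * (2 * (1 - \<delta>) + \<delta> * \<sigma>))"
proof -
  have "0 < 2 * (1 - \<delta>) + \<delta> * \<sigma>" using assms by (intro add_pos_nonneg) auto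
  have "pending_payoff \<kappa> \<delta> (\<lambda>_. (1 - \<delta>) / (2 - \<delta>)) z \<sigma> y =
      ((1 - \<delta>) / (2 - \<delta>) * y + 1 / (2 - \<delta>) * \<delta> * (- \<kappa> + \<sigma> * (((1 - \<delta>) * z - \<delta> * \<kappa>) / (2 * (1 - \<delta>)))))
        / ((2 * (1 - \<delta>) + \<delta> * \<sigma>) / (2 - \<delta>))"
    by (simp only: pending_payoff_def settled_payoff_pbar[OF assms(1)] pbar_weights[OF assms(1)])
  also have "\<dots> = (((1 - \<delta>) * y + \<delta> * (- \<kappa> + \<sigma> * (((1 - \<delta>) * z - \<delta> * \<kappa>) / (2 * (1 - \<delta>))))) / (2 - \<delta>))
        / ((2 * (1 - \<delta>) + \<delta> * \<sigma>) / (2 - \<delta>))"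
    by (simp add: add_divide_distrib)
  also have "\<dots> = ((1 - \<delta>) * y + \<delta> * (- \<kappa> + \<sigma> * (((1 - \<delta>) * z - \<delta> * \<kappa>) / (2 * (1 - \<delta>)))))
        / (2 * (1 - \<delta>) + \<delta> * \<sigma>)"
    using assms by simp
  also have "\<dots> = (2 * (1 - \<delta>) * ((1 - \<delta>) * y - \<delta> * \<kappa>) + \<delta> * \<sigma> * ((1 - \<delta>) * z - \<delta> * \<kappa>))
      / (2 * (1 - \<delta>) * (2 * (1 - \<delta>) + \<delta> * \<sigma>))"
    using assms by (simp add: field_simps)
  finally show ?thesis .
qed

lemma pending_quarter_bound:
  fixes a b K y z :: real
  assumes a: "0 < a" and b: "0 \<le> b" and K: "0 \<le> K" and aK: "2 * K \<le> a * y"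
    and y: "0 < y" "y < z"
  shows "max y ((b * z - K) / (a + b)) \<le> 4 * ((2 * a * (a * y - K) + b * (a * z - K)) / (2 * a * (2 * a + b)))"
proof -
  define N where "N = 2 * a * (a * y - K) + b * (a * z - K)"
  have den: "0 < 2 * a * (2 * a + b)" using a b by simp
  have "y \<le> 4 * (N / (2 * a * (2 * a + b)))"
  proof -
    have "0 \<le> 4 * a * (a * y - 2 * K) + 4 * a * b * (z - y) + 2 * b * (a * y - 2 * K)"
      using a b aK y by (intro add_nonneg_nonneg mult_nonneg_nonneg) auto
    then show ?thesis using den unfolding N_def by (simp add: field_simps)
  qed
  moreover have "(b * z - K) / (a + b) \<le> 4 * (N / (2 * a * (2 * a + b)))"
  proof -
    have "a * y \<le> a * z" using a y by simp
    then have "2 * K \<le> a * z" using aK by linarith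
    moreover have "0 \<le> 2 * a * y - K" using aK K by linarith
    ultimately have "0 \<le> 4 * a * (a + b) * (a * y - 2 * K) + 2 * b * b * (a * z - 2 * K)
        + 4 * a * a * a * y + 4 * a * a * K + 2 * a * b * (2 * a * y - K)"
      using a b K aK y by (intro add_nonneg_nonneg mult_nonneg_nonneg) auto
    then show ?thesis using den a b unfolding N_def by (simp add: field_simps)
  qed
  ultimately show ?thesis unfolding N_def by simp
qed

lemma pbar_binary_ratio_ge:
  assumes \<kappa>: "0 \<le> \<kappa>" and \<delta>: "0 < \<delta>" "\<delta> < 1" and y: "0 < y" "2 * \<delta> * \<kappa> / (1 - \<delta>) \<le> y"
    and z: "0 \<le> z" and \<sigma>: "0 \<le> \<sigma>" "\<sigma> \<le> 1"
  shows "1/4 \<le> U \<kappa> \<delta> (\<lambda>_. (1 - \<delta>) / (2 - \<delta>)) (binary_env z \<sigma>) y / V \<kappa> \<delta> (binary_env z \<sigma>) y"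
proof -
  define a where "a = 1 - \<delta>"
  define b where "b = \<delta> * \<sigma>"
  define K where "K = \<delta> * \<kappa>"
  have a: "0 < a" and b: "0 \<le> b" and K: "0 \<le> K"
    using \<kappa> \<delta> \<sigma> unfolding a_def b_def K_def by simp_all
  have aK: "2 * K \<le> a * y" using y(2) \<delta> unfolding a_def K_def by (simp add: field_simps)
  have rule: "stationary_rule (\<lambda>_. (1 - \<delta>) / (2 - \<delta>))"
    unfolding stationary_rule_def using \<delta> by simp
  have quarter: "1/4 \<le> u / v" if "0 < v" "v \<le> 4 * u" for u v :: real
    using that by (simp add: le_divide_eq)
  note U = U_binary_env[OF rule \<delta> z \<sigma> less_imp_le[OF y(1)]]
  note V = V_binary_env[OF \<kappa> \<delta> z \<sigma> less_imp_le[OF y(1)]]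
  show ?thesis
  proof (cases "z \<le> y")
    case True
    have "U \<kappa> \<delta> (\<lambda>_. (1 - \<delta>) / (2 - \<delta>)) (binary_env z \<sigma>) y / V \<kappa> \<delta> (binary_env z \<sigma>) y
        = (a * y - K) / (2 * a) / y"
      unfolding U V using True settled_payoff_pbar[OF \<delta>(2)] by (simp add: a_def K_def)
    also have "1/4 \<le> \<dots>" using a y(1) aK by (simp add: field_simps)
    finally show ?thesis .
  next
    case False
    have "U \<kappa> \<delta> (\<lambda>_. (1 - \<delta>) / (2 - \<delta>)) (binary_env z \<sigma>) y
        = (2 * a * (a * y - K) + b * (a * z - K)) / (2 * a * (2 * a + b))"
      unfolding U using False pending_payoff_pbar[OF \<delta>(2) less_imp_le[OF \<delta>(1)] \<sigma>(1)]
      by (simp add: a_def b_def K_def)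
    moreover have "V \<kappa> \<delta> (binary_env z \<sigma>) y = max y ((b * z - K) / (a + b))"
      unfolding V waiting_value_def using False by (simp add: a_def b_def K_def algebra_simps)
    ultimately show ?thesis
      using pending_quarter_bound[OF a b K aK y(1)] False y(1) by (intro quarter) auto
  qed
qed

section \<open>No stationary rule guarantees more than one quarter\<close>

(* Expected discount factor at the stopping time, sum over n of p t ((1 - p t) delta)^n,
   while the best alternative stays at t. *)

definition stop_weight :: "real \<Rightarrow> (real \<Rightarrow> real) \<Rightarrow> real \<Rightarrow> real" where
  "stop_weight \<delta> p t = p t / (1 - (1 - p t) * \<delta>)"

lemma stop_weight_bounds:
  assumes "stationary_rule p" "0 \<le> \<delta>" "\<delta> < 1"
  shows "0 \<le> stop_weight \<delta> p t" "stop_weight \<delta> p t \<le> 1"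
proof -
  have q: "0 \<le> p t" "p t \<le> 1" using assms(1) unfolding stationary_rule_def by auto
  have "(1 - p t) * \<delta> \<le> 1 - p t" using q assms by (intro mult_right_le_one_le) auto
  moreover have "(1 - p t) * \<delta> < 1" using stationary_rule_contraction[OF assms, of 0] by simp
  ultimately show "0 \<le> stop_weight \<delta> p t" "stop_weight \<delta> p t \<le> 1"
    unfolding stop_weight_def using q by simp_all
qed

lemma one_minus_stop_weight:
  assumes "stationary_rule p" "0 \<le> \<delta>" "\<delta> < 1"
  shows "(1 - p t) / (1 - (1 - p t) * \<delta>) = (1 - stop_weight \<delta> p t) / (1 - \<delta>)"
proof -
  define D where "D = 1 - (1 - p t) * \<delta>"
  have "(1 - p t) * \<delta> < 1" using stationary_rule_contraction[OF assms, of 0] by simp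
  then have "D \<noteq> 0" unfolding D_def by simp
  then have "1 - stop_weight \<delta> p t = (1 - p t) * (1 - \<delta>) / D"
    unfolding stop_weight_def D_def[symmetric] by (simp add: field_simps D_def)
  then show ?thesis using assms(3) unfolding D_def by simp
qed

lemma settled_payoff_le:
  assumes p: "stationary_rule p" and \<kappa>: "0 \<le> \<kappa>" and \<delta>: "0 \<le> \<delta>" "\<delta> < 1"
  shows "settled_payoff \<kappa> \<delta> p t \<le> stop_weight \<delta> p t * t"
proof -
  have "0 < 1 - (1 - p t) * \<delta>" using stationary_rule_contraction[OF p \<delta>, of 0] by simp
  moreover have "0 \<le> (1 - p t) * \<delta> * \<kappa>" using p \<kappa> \<delta> unfolding stationary_rule_def by simp
  ultimately show ?thesis
    unfolding settled_payoff_def stop_weight_def by (simp add: divide_right_mono)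
qed

lemma pending_payoff_le:
  assumes p: "stationary_rule p" and \<kappa>: "0 \<le> \<kappa>" and \<delta>: "0 < \<delta>" "\<delta> < 1"
    and y: "0 \<le> y" and z: "0 \<le> z" and \<sigma>: "0 \<le> \<sigma>" "\<sigma> \<le> 1"
  shows "pending_payoff \<kappa> \<delta> p z \<sigma> y
    \<le> (y + \<delta> * (\<sigma> * z) * ((1 - stop_weight \<delta> p y) * stop_weight \<delta> p z)) / (1 - \<delta>)"
proof -
  define q where "q = p y"
  define g where "g = stop_weight \<delta> p y"
  define g' where "g' = stop_weight \<delta> p z"
  define D where "D = 1 - (1 - q) * \<delta>"
  have q: "0 \<le> q" "q \<le> 1" using p unfolding q_def stationary_rule_def by auto
  have g: "0 \<le> g" "g \<le> 1" "0 \<le> g'"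
    using stop_weight_bounds[OF p less_imp_le[OF \<delta>(1)] \<delta>(2)] unfolding g_def g'_def by auto
  have D: "1 - \<delta> \<le> D" using q \<delta> unfolding D_def by (simp add: mult_left_le_one_le)
  have "D \<le> 1 - (1 - q) * \<delta> * (1 - \<sigma>)"
    using q \<delta> \<sigma> unfolding D_def by (simp add: mult_right_le_one_le)
  define N where "N = q * y + (1 - q) * \<delta> * (\<sigma> * z * g')"
  have N: "0 \<le> N" unfolding N_def using q \<delta> \<sigma> y z g by simp
  have "- \<kappa> + \<sigma> * settled_payoff \<kappa> \<delta> p z \<le> \<sigma> * z * g'"
    using mult_left_mono[OF settled_payoff_le[OF p \<kappa> less_imp_le[OF \<delta>(1)] \<delta>(2), of z] \<sigma>(1)] \<kappa>
    unfolding g'_def by (simp add: algebra_simps)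
  then have "q * y + (1 - q) * \<delta> * (- \<kappa> + \<sigma> * settled_payoff \<kappa> \<delta> p z) \<le> N"
    unfolding N_def using q \<delta> by (simp add: mult_left_mono)
  then have "pending_payoff \<kappa> \<delta> p z \<sigma> y \<le> N / (1 - (1 - q) * \<delta> * (1 - \<sigma>))"
    unfolding pending_payoff_def q_def[symmetric] using \<open>D \<le> _\<close> D \<delta> by (intro divide_right_mono) auto
  also have "\<dots> \<le> N / D" using \<open>D \<le> _\<close> D N \<delta> by (intro divide_left_mono) auto
  also have "N / D = g * y + \<delta> * (\<sigma> * z) * ((1 - g) * g') / (1 - \<delta>)"
  proof -
    have "N / D = q / D * y + \<delta> * (\<sigma> * z) * g' * ((1 - q) / D)"
      using D \<delta> unfolding N_def by (simp add: field_simps)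
    also have "\<dots> = g * y + \<delta> * (\<sigma> * z) * g' * ((1 - g) / (1 - \<delta>))"
      using one_minus_stop_weight[OF p less_imp_le[OF \<delta>(1)] \<delta>(2), of y]
      unfolding g_def q_def D_def stop_weight_def by simp
    also have "\<dots> = g * y + \<delta> * (\<sigma> * z) * ((1 - g) * g') / (1 - \<delta>)"
      by (simp add: field_simps)
    finally show ?thesis .
  qed
  also have "\<dots> \<le> (y + \<delta> * (\<sigma> * z) * ((1 - g) * g')) / (1 - \<delta>)"
  proof -
    have "g * y \<le> y" using g y by (intro mult_left_le_one_le) auto
    also have "y \<le> y / (1 - \<delta>)" using y \<delta> by (simp add: pos_le_divide_eq mult_right_le_one_le)
    finally have "g * y \<le> y / (1 - \<delta>)" .
    then show ?thesis by (simp add: add_divide_distrib)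
  qed
  finally show ?thesis unfolding g_def g'_def .
qed

lemma binary_ratio_le:
  assumes p: "stationary_rule p" and \<kappa>: "0 \<le> \<kappa>" and \<delta>: "0 < \<delta>" "\<delta> < 1"
    and y: "0 < y" "y < z" and \<sigma>: "0 < \<sigma>" "\<sigma> \<le> 1" and prize: "\<kappa> < \<sigma> * z"
  shows "U \<kappa> \<delta> p (binary_env z \<sigma>) y / V \<kappa> \<delta> (binary_env z \<sigma>) y
    \<le> (y + \<delta> * (\<sigma> * z) * ((1 - stop_weight \<delta> p y) * stop_weight \<delta> p z)) / (\<delta> * (\<sigma> * z - \<kappa>))
      * ((1 - \<delta> * (1 - \<sigma>)) / (1 - \<delta>))"
proof -
  define B where "B = (y + \<delta> * (\<sigma> * z) * ((1 - stop_weight \<delta> p y) * stop_weight \<delta> p z)) / (1 - \<delta>)"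
  define W where "W = waiting_value \<kappa> \<delta> z \<sigma>"
  have y0: "0 \<le> y" and z0: "0 \<le> z" and \<sigma>0: "0 \<le> \<sigma>" using y \<sigma> by simp_all
  have "\<delta> * (1 - \<sigma>) \<le> \<delta>" using \<delta> \<sigma> by (intro mult_right_le_one_le) auto
  then have "\<delta> * (1 - \<sigma>) < 1" using \<delta> by linarith
  then have W: "0 < W" unfolding W_def waiting_value_def using \<delta> prize by simp
  have g: "0 \<le> stop_weight \<delta> p t" "stop_weight \<delta> p t \<le> 1" for t
    using stop_weight_bounds[OF p less_imp_le[OF \<delta>(1)] \<delta>(2)] by auto
  have B: "0 \<le> B" unfolding B_def using y \<delta> \<sigma> z0 g by simp
  have u: "U \<kappa> \<delta> p (binary_env z \<sigma>) y \<le> B"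
    unfolding U_binary_env[OF p \<delta> z0 \<sigma>0 \<sigma>(2) y0] B_def
    using y pending_payoff_le[OF p \<kappa> \<delta> y0 z0 \<sigma>0 \<sigma>(2)] by simp
  have v: "W \<le> V \<kappa> \<delta> (binary_env z \<sigma>) y"
    unfolding V_binary_env[OF \<kappa> \<delta> z0 \<sigma>0 \<sigma>(2) y0] W_def using y by simp
  have "U \<kappa> \<delta> p (binary_env z \<sigma>) y / V \<kappa> \<delta> (binary_env z \<sigma>) y \<le> B / W"
    using u v W B by (meson divide_right_mono frac_le order.trans less_le_trans order.strict_implies_order)
  also have "B / W = (y + \<delta> * (\<sigma> * z) * ((1 - stop_weight \<delta> p y) * stop_weight \<delta> p z)) / (\<delta> * (\<sigma> * z - \<kappa>))
      * ((1 - \<delta> * (1 - \<sigma>)) / (1 - \<delta>))"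
    unfolding B_def W_def waiting_value_def by (simp add: field_simps)
  finally show ?thesis .
qed

lemma one_minus_mult_le_quarter:
  fixes a b s \<epsilon> :: real
  assumes "0 \<le> b" "b \<le> s" "s \<le> 1" "s - \<epsilon> < a" "a \<le> 1" "0 \<le> \<epsilon>"
  shows "(1 - a) * b \<le> 1/4 + \<epsilon>"
proof -
  have "(1 - a) * b \<le> (1 - a) * s" using assms by (intro mult_left_mono) auto
  also have "\<dots> \<le> (1 - s + \<epsilon>) * s" using assms by (intro mult_right_mono) auto
  also have "\<dots> = 1/4 - (s - 1/2)\<^sup>2 + \<epsilon> * s" by (simp add: algebra_simps power2_eq_square)
  also have "\<dots> \<le> 1/4 + \<epsilon>"
    using assms mult_right_le_one_le[of \<epsilon> s] zero_le_power2[of "s - 1/2"] by linarith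
  finally show ?thesis .
qed

lemma exists_stop_weight_product_le:
  assumes p: "stationary_rule p" and \<delta>: "0 \<le> \<delta>" "\<delta> < 1" and \<epsilon>: "0 < \<epsilon>"
  obtains y where "x0 \<le> y" "\<And>z. x0 \<le> z \<Longrightarrow> (1 - stop_weight \<delta> p y) * stop_weight \<delta> p z \<le> 1/4 + \<epsilon>"
proof -
  define s where "s = (SUP t\<in>{x0..}. stop_weight \<delta> p t)"
  note g = stop_weight_bounds[OF p \<delta>]
  have bdd: "bdd_above (stop_weight \<delta> p ` {x0..})" using g by (intro bdd_aboveI[of _ 1]) auto
  have upper: "stop_weight \<delta> p z \<le> s" if "x0 \<le> z" for z
    unfolding s_def using bdd that by (intro cSUP_upper) auto
  have "s \<le> 1" unfolding s_def using g by (intro cSUP_least) auto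
  obtain y where "x0 \<le> y" "s - \<epsilon> < stop_weight \<delta> p y"
    using less_cSUP_iff[OF _ bdd, of "s - \<epsilon>"] \<epsilon> unfolding s_def by auto
  then show ?thesis
    using upper \<open>s \<le> 1\<close> g \<epsilon> by (intro that) (auto intro!: one_minus_mult_le_quarter[where s = s])
qed

lemma exists_rare_prize:
  fixes X :: "real set"
  assumes "\<not> bdd_above X" "0 < M" "0 < \<sigma>0"
  obtains z \<sigma> where "z \<in> X" "y < z" "0 < \<sigma>" "\<sigma> \<le> 1" "\<sigma> \<le> \<sigma>0" "\<sigma> * z = M"
proof -
  obtain z where z: "z \<in> X" "max (max y M) (M / \<sigma>0) < z"
    using assms(1) unfolding bdd_above_def by (metis not_le)
  then have "y < z" "M < z" "M < \<sigma>0 * z"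
    using assms(3) by (auto simp: pos_divide_less_eq mult.commute)
  then show ?thesis
    using z(1) assms(2) by (intro that[of z "M / z"]) (auto simp: pos_divide_le_eq)
qed

lemma exists_binary_ratio_le:
  assumes p: "stationary_rule p" and \<kappa>: "0 \<le> \<kappa>" and \<delta>: "0 < \<delta>" "\<delta> < 1"
    and y: "0 < y" and X: "\<not> bdd_above X" and \<epsilon>: "0 < \<epsilon>" and G: "0 \<le> G"
    and weights: "\<And>z. y < z \<Longrightarrow> (1 - stop_weight \<delta> p y) * stop_weight \<delta> p z \<le> G"
  obtains z \<sigma> where "z \<in> X" "0 \<le> \<sigma>" "\<sigma> \<le> 1"
    "U \<kappa> \<delta> p (binary_env z \<sigma>) y / V \<kappa> \<delta> (binary_env z \<sigma>) y \<le> (G + \<epsilon>) * (1 + \<epsilon>)"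
proof -
  \<comment> \<open>A large expected prize M per round makes y and the search cost negligible, and a
    small arrival probability makes the waiting factor (1 - delta (1 - sigma)) / (1 - delta) close to 1.\<close>
  define M where "M = max (\<kappa> + 1) ((y + \<delta> * \<kappa> * (G + \<epsilon>)) / (\<epsilon> * \<delta>))"
  have M: "\<kappa> < M" "0 < M" unfolding M_def using \<kappa> by auto
  have "(y + \<delta> * \<kappa> * (G + \<epsilon>)) / (\<epsilon> * \<delta>) \<le> M" unfolding M_def by simp
  then have M_large: "y + \<delta> * \<kappa> * (G + \<epsilon>) \<le> \<epsilon> * \<delta> * M"
    using \<epsilon> \<delta> by (simp add: pos_divide_le_eq mult.commute)
  define \<sigma>0 where "\<sigma>0 = \<epsilon> * (1 - \<delta>)"
  have \<sigma>0: "0 < \<sigma>0" unfolding \<sigma>0_def using \<epsilon> \<delta> by simp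
  obtain z \<sigma> where z: "z \<in> X" and yz: "y < z" and \<sigma>: "0 < \<sigma>" "\<sigma> \<le> 1" "\<sigma> * z = M" "\<sigma> \<le> \<sigma>0"
    using exists_rare_prize[OF X M(2) \<sigma>0] by metis
  define G' where "G' = (1 - stop_weight \<delta> p y) * stop_weight \<delta> p z"
  have "U \<kappa> \<delta> p (binary_env z \<sigma>) y / V \<kappa> \<delta> (binary_env z \<sigma>) y
      \<le> (y + \<delta> * M * G') / (\<delta> * (M - \<kappa>)) * ((1 - \<delta> * (1 - \<sigma>)) / (1 - \<delta>))"
    using binary_ratio_le[OF p \<kappa> \<delta> y yz \<sigma>(1,2)] M \<sigma>(3) unfolding G'_def by simp
  also have "\<dots> \<le> (G + \<epsilon>) * (1 + \<epsilon>)"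
  proof (rule mult_mono)
    have "\<delta> * M * G' \<le> \<delta> * M * G" using weights[OF yz] M \<delta> unfolding G'_def by simp
    then have "y + \<delta> * M * G' \<le> (G + \<epsilon>) * (\<delta> * (M - \<kappa>))"
      using M_large by (simp add: algebra_simps)
    then show "(y + \<delta> * M * G') / (\<delta> * (M - \<kappa>)) \<le> G + \<epsilon>"
      using \<delta> M by (simp add: pos_divide_le_eq)
    have "\<delta> * \<sigma> \<le> \<sigma>" using \<sigma> \<delta> by (intro mult_left_le_one_le) auto
    then have "\<delta> * \<sigma> \<le> \<sigma>0" using \<sigma> by linarith
    then have "1 - \<delta> * (1 - \<sigma>) \<le> (1 + \<epsilon>) * (1 - \<delta>)" unfolding \<sigma>0_def by (simp add: algebra_simps)
    then show "(1 - \<delta> * (1 - \<sigma>)) / (1 - \<delta>) \<le> 1 + \<epsilon>" using \<delta> by (simp add: pos_divide_le_eq)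
    show "0 \<le> G + \<epsilon>" using G \<epsilon> by simp
    have "\<delta> * (1 - \<sigma>) \<le> \<delta>" using \<delta> \<sigma> by (intro mult_right_le_one_le) auto
    then have "0 \<le> 1 - \<delta> * (1 - \<sigma>)" using \<delta> by linarith
    then show "0 \<le> (1 - \<delta> * (1 - \<sigma>)) / (1 - \<delta>)" using \<delta> by simp
  qed
  finally show ?thesis using z \<sigma>(1,2) by (intro that) simp_all
qed

lemma perf_ratio_le_quarter:
  assumes p: "stationary_rule p" and \<kappa>: "0 \<le> \<kappa>" and \<delta>: "0 < \<delta>" "\<delta> < 1"
    and x0: "0 < x0" and X: "X \<subseteq> {0..}" "\<not> bdd_above X"
  shows "perf_ratio \<kappa> \<delta> X p x0 \<le> 1/4"
proof (rule field_le_epsilon)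
  fix e :: real
  assume "0 < e"
  define \<epsilon> where "\<epsilon> = min 1 (e / 5)"
  have \<epsilon>: "0 < \<epsilon>" "\<epsilon> \<le> 1" "5 * \<epsilon> \<le> e" unfolding \<epsilon>_def using \<open>0 < e\<close> by auto
  obtain y where y: "x0 \<le> y"
    and weights: "\<And>z. x0 \<le> z \<Longrightarrow> (1 - stop_weight \<delta> p y) * stop_weight \<delta> p z \<le> 1/4 + \<epsilon>"
    using exists_stop_weight_product_le[OF p less_imp_le[OF \<delta>(1)] \<delta>(2) \<epsilon>(1)] by blast
  have "0 < y" using x0 y by simp
  moreover have "0 \<le> 1/4 + \<epsilon>" using \<epsilon> by simp
  moreover have "(1 - stop_weight \<delta> p y) * stop_weight \<delta> p z \<le> 1/4 + \<epsilon>" if "y < z" for z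
    using weights y that by simp
  ultimately obtain z \<sigma> where z: "z \<in> X" "0 \<le> \<sigma>" "\<sigma> \<le> 1"
    and ratio: "U \<kappa> \<delta> p (binary_env z \<sigma>) y / V \<kappa> \<delta> (binary_env z \<sigma>) y \<le> (1/4 + \<epsilon> + \<epsilon>) * (1 + \<epsilon>)"
    using exists_binary_ratio_le[OF p \<kappa> \<delta> _ X(2) \<epsilon>(1)] by blast
  have "perf_ratio \<kappa> \<delta> X p x0 \<le> U \<kappa> \<delta> p (binary_env z \<sigma>) y / V \<kappa> \<delta> (binary_env z \<sigma>) y"
    using perf_ratio_le_binary[OF p \<kappa> \<delta> X(1) x0 y z] .
  also have "\<dots> \<le> (1/4 + \<epsilon> + \<epsilon>) * (1 + \<epsilon>)" using ratio .
  also have "\<dots> \<le> 1/4 + e"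
  proof -
    have "(1/4 + \<epsilon> + \<epsilon>) * (1 + \<epsilon>) = 1/4 + (9/4) * \<epsilon> + 2 * (\<epsilon> * \<epsilon>)"
      by (simp add: field_simps)
    moreover have "\<epsilon> * \<epsilon> \<le> \<epsilon>" using \<epsilon> by (intro mult_right_le_one_le) auto
    ultimately show ?thesis using \<epsilon> by linarith
  qed
  finally show "perf_ratio \<kappa> \<delta> X p x0 \<le> 1/4 + e" .
qed

lemma dynamically_robustI:
  assumes "stationary_rule p"
    and "\<And>p'. stationary_rule p' \<Longrightarrow> perf_ratio \<kappa> \<delta> X p' x0 \<le> perf_ratio \<kappa> \<delta> X p x0"
  shows "dynamically_robust \<kappa> \<delta> X p x0"
  unfolding dynamically_robust_def using assms by (intro cSup_eq_maximum[symmetric]) auto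

theorem theorem3:
  fixes X :: "real set" and \<kappa> \<delta> x0 :: real
  assumes "X \<in> sets borel" and "X \<subseteq> {0..}" and "0 \<in> X"
    and "\<kappa> \<ge> 0" and "0 < \<delta>" and "\<delta> < 1"
    and "x0 > 0" and "x0 \<ge> 2 * \<delta> * \<kappa> / (1 - \<delta>)"
  shows "perf_ratio \<kappa> \<delta> X (\<lambda>y. (1 - \<delta>) / (2 - \<delta>)) x0 \<ge> 1/4 \<and>
    (\<not> bdd_above X \<longrightarrow> dynamically_robust \<kappa> \<delta> X (\<lambda>y. (1 - \<delta>) / (2 - \<delta>)) x0)"
proof -
  have rule: "stationary_rule (\<lambda>y. (1 - \<delta>) / (2 - \<delta>))"
    unfolding stationary_rule_def using assms(6) by simp
  have quarter: "1/4 \<le> perf_ratio \<kappa> \<delta> X (\<lambda>y. (1 - \<delta>) / (2 - \<delta>)) x0"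
  proof (rule perf_ratio_ge_binary[OF assms(3)])
    fix y z \<sigma> :: real
    assume "x0 \<le> y" "z \<in> X" "0 \<le> \<sigma>" "\<sigma> \<le> 1"
    then show "1/4 \<le> U \<kappa> \<delta> (\<lambda>y. (1 - \<delta>) / (2 - \<delta>)) (binary_env z \<sigma>) y / V \<kappa> \<delta> (binary_env z \<sigma>) y"
      using assms(2,4-8) by (intro pbar_binary_ratio_ge) auto
  qed
  have "dynamically_robust \<kappa> \<delta> X (\<lambda>y. (1 - \<delta>) / (2 - \<delta>)) x0" if "\<not> bdd_above X"
  proof (rule dynamically_robustI[OF rule])
    fix p' assume "stationary_rule p'"
    then show "perf_ratio \<kappa> \<delta> X p' x0 \<le> perf_ratio \<kappa> \<delta> X (\<lambda>y. (1 - \<delta>) / (2 - \<delta>)) x0"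
      using perf_ratio_le_quarter[OF _ assms(4-7,2) that] quarter by (meson order.trans)
  qed
  then show ?thesis using quarter by simp
qed

end
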